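(* Let $k\in\{3,4\}$. There is a constant $C$ independent of $N$, $\lambda$ and the frequencies such that $|M_{k+2}(\xi_1,\dots,\xi_{k+2})|\le C\,|\alpha_{k+2}(\xi_1,\dots,\xi_{k+2})|$ for all $(\xi_1,\dots,\xi_{k+2})\in\Omega$.
   Context: Fix $k\in\{3,4\}$, $s\in[\tfrac12,1)$, a large parameter $N\ge1$ and a period $\lambda\ge1$. The frequency variables range over $\frac1\lambda\mathbb Z$. The multiplier $m=m_{N,s}:\mathbb R\to(0,1]$ is a smooth even function, nonincreasing in $|\xi|$, with $m(\xi)=1$ for $|\xi|\le N$ and $m(\xi)=N^{1-s}|\xi|^{s-1}$ for $|\xi|>2N$. For $n\ge2$, $\Gamma_n=\{(\xi_1,\dots,\xi_n)\in(\frac1\lambda\mathbb Z)^n:\xi_1+\dots+\xi_n=0\}$. Write $m_j=m(\xi_j)$, $\alpha_n=\xi_1^3+\dots+\xi_n^3$, $M_{k+2}=i(m_1^2\xi_1^3+\dots+m_{k+2}^2\xi_{k+2}^3)$. For a tuple of frequencies, $\xi_1^*,\xi_2^*,\dots$ denotes its rearrangement with $|\xi_1^*|\ge|\xi_2^*|\ge\cdots$; when $k=3$ set $\xi_6^*=0$. Notation: $A\lesssim B$ means $A\le CB$ with $C$ independent of $N,\lambda$ and the frequencies; $A\sim B$ means $A\lesssim B\lesssim A$; $A\ll B$ (or $B\gg A$) means $A\le C_0^{-1}B$ for a fixed sufficiently large absolute constant $C_0$. The non-resonant set is $\Omega=\Omega_1\cup\Omega_2\cup\Omega_3\cup\Omega_4\subset\Gamma_{k+2}$,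 where $\Omega_1=\{|\xi_3^*|\gg|\xi_4^*|\}$; $\Omega_2=\{|\xi_1^*|\sim|\xi_2^*|\gtrsim N\gg|\xi_3^*|\sim|\xi_4^*|,\ |{\xi_1^*}^3+{\xi_2^*}^3|\gg|{\xi_3^*}^3+\dots+{\xi_{k+2}^*}^3|\}$; $\Omega_3=\{|\xi_1^*|\gg|\xi_3^*|,\ |\xi_1^*+\xi_2^*||\xi_1^*|\gg|\xi_3^*|^2\}$; $\Omega_4=\{|\xi_4^*|\gg|\xi_5^*|,\ |\xi_1^*+\xi_2^*||\xi_1^*+\xi_3^*||\xi_1^*+\xi_4^*|\gg|\xi_5^*||\xi_1^*|^2,\ |m(\xi_1^* )^2{\xi_1^*}^3+\dots+m(\xi_4^* )^2{\xi_4^*}^3|\gg|m(\xi_5^* )^2{\xi_5^*}^3+m(\xi_6^* )^2{\xi_6^*}^3|\}$ (each set consisting of the points of $\Gamma_{k+2}$ satisfying the listed conditions). *)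

theory Defs
  imports "HOL-Analysis.Analysis"
begin

definition smooth_fun :: "(real \<Rightarrow> real) \<Rightarrow> bool" where
  "smooth_fun f \<longleftrightarrow> (\<forall>n x. ((deriv ^^ n) f) differentiable (at x))"

text \<open>Admissible profile mu for the I-method multiplier: m_{N,s}(xi) = mu(xi/N).\<close>
definition profile :: "real \<Rightarrow> (real \<Rightarrow> real) \<Rightarrow> bool" where
  "profile s \<mu> \<longleftrightarrow> smooth_fun \<mu> \<and> (\<forall>x. \<mu> (-x) = \<mu> x)
     \<and> (\<forall>x y. \<bar>x\<bar> \<le> \<bar>y\<bar> \<longrightarrow> \<mu> y \<le> \<mu> x)
     \<and> (\<forall>x. 0 < \<mu> x \<and> \<mu> x \<le> 1)
     \<and> (\<forall>x. \<bar>x\<bar> \<le> 1 \<longrightarrow> \<mu> x = 1)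
     \<and> (\<forall>x. \<bar>x\<bar> > 2 \<longrightarrow> \<mu> x = \<bar>x\<bar> powr (s - 1))"

definition mult :: "(real \<Rightarrow> real) \<Rightarrow> real \<Rightarrow> real \<Rightarrow> real" where
  "mult \<mu> N \<xi> = \<mu> (\<xi> / N)"

definition ll :: "real \<Rightarrow> real \<Rightarrow> real \<Rightarrow> bool" where
  "ll c0 a b \<longleftrightarrow> a \<le> b / c0"

text \<open>Frequencies: xi :: nat => real, indices 0..<n with n = k+2.\<close>
definition Gamma :: "real \<Rightarrow> nat \<Rightarrow> (nat \<Rightarrow> real) set" where
  "Gamma lam n = {\<xi>. (\<forall>i<n. \<exists>z::int. \<xi> i = of_int z / lam) \<and> (\<Sum>i<n. \<xi> i) = 0}"

definition alpha :: "nat \<Rightarrow> (nat \<Rightarrow> real) \<Rightarrow> real" where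
  "alpha n \<xi> = (\<Sum>i<n. \<xi> i ^ 3)"

definition Mk :: "(real \<Rightarrow> real) \<Rightarrow> nat \<Rightarrow> (nat \<Rightarrow> real) \<Rightarrow> complex" where
  "Mk m n \<xi> = \<i> * complex_of_real (\<Sum>i<n. (m (\<xi> i))\<^sup>2 * \<xi> i ^ 3)"

text \<open>sigma is a decreasing rearrangement (0-based: xs 0 = xi_1^*), padded with zeros.\<close>
definition sorting_perm :: "nat \<Rightarrow> (nat \<Rightarrow> real) \<Rightarrow> (nat \<Rightarrow> nat) \<Rightarrow> bool" where
  "sorting_perm n \<xi> \<sigma> \<longleftrightarrow> bij_betw \<sigma> {..<n} {..<n}
     \<and> (\<forall>i j. i \<le> j \<longrightarrow> j < n \<longrightarrow> \<bar>\<xi> (\<sigma> j)\<bar> \<le> \<bar>\<xi> (\<sigma> i)\<bar>)"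

definition rearr :: "nat \<Rightarrow> (nat \<Rightarrow> real) \<Rightarrow> (nat \<Rightarrow> nat) \<Rightarrow> nat \<Rightarrow> real" where
  "rearr n \<xi> \<sigma> j = (if j < n then \<xi> (\<sigma> j) else 0)"

text \<open>Conditions defining Omega_1..Omega_4 in terms of the rearranged tuple x (x 0 = xi_1^*).
  A is the implicit constant in \<sim>, \<lesssim>; c0 the constant in <<.\<close>
definition Om1 :: "real \<Rightarrow> (nat \<Rightarrow> real) \<Rightarrow> bool" where
  "Om1 c0 x \<longleftrightarrow> ll c0 \<bar>x 3\<bar> \<bar>x 2\<bar>"

definition Om2 :: "real \<Rightarrow> real \<Rightarrow> real \<Rightarrow> nat \<Rightarrow> (nat \<Rightarrow> real) \<Rightarrow> bool" where
  "Om2 A c0 N n x \<longleftrightarrow>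
     \<bar>x 0\<bar> \<le> A * \<bar>x 1\<bar> \<and> \<bar>x 1\<bar> \<le> A * \<bar>x 0\<bar>
     \<and> N \<le> A * \<bar>x 1\<bar> \<and> ll c0 \<bar>x 2\<bar> N
     \<and> \<bar>x 2\<bar> \<le> A * \<bar>x 3\<bar> \<and> \<bar>x 3\<bar> \<le> A * \<bar>x 2\<bar>
     \<and> ll c0 \<bar>\<Sum>j\<in>{2..<n}. x j ^ 3\<bar> \<bar>x 0 ^ 3 + x 1 ^ 3\<bar>"

definition Om3 :: "real \<Rightarrow> (nat \<Rightarrow> real) \<Rightarrow> bool" where
  "Om3 c0 x \<longleftrightarrow> ll c0 \<bar>x 2\<bar> \<bar>x 0\<bar> \<and> ll c0 (\<bar>x 2\<bar>\<^sup>2) (\<bar>x 0 + x 1\<bar> * \<bar>x 0\<bar>)"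

definition Om4 :: "(real \<Rightarrow> real) \<Rightarrow> real \<Rightarrow> (nat \<Rightarrow> real) \<Rightarrow> bool" where
  "Om4 m c0 x \<longleftrightarrow> ll c0 \<bar>x 4\<bar> \<bar>x 3\<bar>
     \<and> ll c0 (\<bar>x 4\<bar> * \<bar>x 0\<bar>\<^sup>2) (\<bar>x 0 + x 1\<bar> * \<bar>x 0 + x 2\<bar> * \<bar>x 0 + x 3\<bar>)
     \<and> ll c0 \<bar>(m (x 4))\<^sup>2 * x 4 ^ 3 + (m (x 5))\<^sup>2 * x 5 ^ 3\<bar>
             \<bar>\<Sum>j<4. (m (x j))\<^sup>2 * x j ^ 3\<bar>"

definition Omega :: "(real \<Rightarrow> real) \<Rightarrow> real \<Rightarrow> real \<Rightarrow> real \<Rightarrow> real \<Rightarrow> nat \<Rightarrow> (nat \<Rightarrow> real) set" where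
  "Omega m A c0 N lam n = {\<xi> \<in> Gamma lam n. \<exists>\<sigma>. sorting_perm n \<xi> \<sigma> \<and>
      (let x = rearr n \<xi> \<sigma> in Om1 c0 x \<or> Om2 A c0 N n x \<or> Om3 c0 x \<or> Om4 m c0 x)}"

end

theory Submission
  imports Defs
begin

text \<open>Write the symbol as \<open>m(\<xi>)\<^sup>2 \<xi>\<^sup>3 = N\<^sup>3 g(\<xi>/N)\<close> with \<open>g(x) = \<mu>(x)\<^sup>2 x\<^sup>3\<close>. Since
  \<open>\<mu>(x) = |x|\<^bsup>s-1\<^esup>\<close> for \<open>|x| > 2\<close> and \<open>s < 1\<close>, the odd function \<open>g\<close> has a bounded third
  derivative. The mean value theorem then gives \<open>|g(x) + g(y)| \<lesssim> (x\<^sup>2 + y\<^sup>2)|x + y|\<close> and, for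
  \<open>a + b + c + d = 0\<close>, \<open>|g(a) + g(b) + g(c) + g(d)| \<lesssim> |(a + b)(a + c)(a + d)|\<close>; both bounds are
  invariant under the rescaling by \<open>N\<close>. On each of the regions \<open>\<Omega>\<^sub>1, \<dots>, \<Omega>\<^sub>4\<close> they bound the
  symbol by a quantity \<open>Z\<close> (\<open>a\<^sup>2|c|\<close>, \<open>|a\<^sup>3 + b\<^sup>3|\<close>, \<open>a\<^sup>2|a + b|\<close> resp. \<open>|a + b||a + c||a + d|\<close>
  for the ordered frequencies \<open>a, b, c, \<dots>\<close>), while the factorisations of sums of two, three
  and four cubes with vanishing or almost vanishing sum show \<open>|\<alpha>| \<gtrsim> Z\<close> there.\<close>

lemma abs_diff_le_of_deriv_bound:
  fixes F F' :: "real \<Rightarrow> real"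
  assumes deriv: "\<And>t. (F has_real_derivative F' t) (at t)"
    and bound: "\<And>t. min x y \<le> t \<Longrightarrow> t \<le> max x y \<Longrightarrow> \<bar>F' t\<bar> \<le> B"
  shows "\<bar>F x - F y\<bar> \<le> B * \<bar>x - y\<bar>"
  using field_differentiable_bound[of "{min x y..max x y}" F F' B x y] deriv bound
  by (auto intro: has_field_derivative_at_within)

lemma DERIV_eq_of_eq_on_open:
  fixes F G :: "real \<Rightarrow> real"
  assumes "open S" "x \<in> S" "\<And>y. y \<in> S \<Longrightarrow> F y = G y"
    and "(F has_real_derivative F') (at x)" "(G has_real_derivative G') (at x)"
  shows "F' = G'"
  using has_field_derivative_transform_within_open[OF assms(4,1,2,3)] assms(5) DERIV_unique by blast

lemma DERIV_reflect:
  fixes F F' :: "real \<Rightarrow> real"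
  assumes deriv: "\<And>t. (F has_real_derivative F' t) (at t)"
    and parity: "\<And>y. F (-y) = c * F y" and c: "c * c = 1"
  shows "F' (-x) = - c * F' x"
proof -
  have reflected: "(\<lambda>y. c * F (-y)) = F"
  proof
    fix y show "c * F (-y) = F y" using parity[of "-y"] c by (simp add: mult.assoc[symmetric])
  qed
  have "((\<lambda>y. c * F (-y)) has_real_derivative c * (F' (-x) * (-1))) (at x)"
    by (rule DERIV_cmult, rule DERIV_chain2[OF deriv]) (auto intro!: derivative_eq_intros)
  then have "(F has_real_derivative - c * F' (-x)) (at x)" by (simp add: reflected)
  then have "F' x = - c * F' (-x)" using DERIV_unique deriv by blast
  then have "c * F' x = - (c * c) * F' (-x)" by simp
  then show ?thesis using c by simp
qed

locale odd_bounded_third_deriv =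
  fixes g g1 g2 g3 :: "real \<Rightarrow> real" and K :: real
  assumes g_deriv: "\<And>x. (g has_real_derivative g1 x) (at x)"
    and g1_deriv: "\<And>x. (g1 has_real_derivative g2 x) (at x)"
    and g2_deriv: "\<And>x. (g2 has_real_derivative g3 x) (at x)"
    and abs_g3_le: "\<And>x. \<bar>g3 x\<bar> \<le> K"
    and g_odd: "\<And>x. g (-x) = - g x"
    and g1_0: "g1 0 = 0"
begin

lemma K_nonneg: "0 \<le> K"
  using abs_g3_le[of 0] by linarith

lemma g1_even: "g1 (-x) = g1 x"
  using DERIV_reflect[OF g_deriv, of "-1"] g_odd by simp

lemma g2_odd: "g2 (-x) = - g2 x"
  using DERIV_reflect[OF g1_deriv, of 1] g1_even by simp

lemma g2_0: "g2 0 = 0"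
  using g2_odd[of 0] by simp

lemma abs_g2_le: "\<bar>g2 x\<bar> \<le> K * \<bar>x\<bar>"
  using abs_diff_le_of_deriv_bound[OF g2_deriv, of x 0 K] abs_g3_le g2_0 by simp

lemma abs_g1_le: "\<bar>g1 x\<bar> \<le> K * x\<^sup>2"
proof -
  have "\<bar>g1 x - g1 0\<bar> \<le> (K * \<bar>x\<bar>) * \<bar>x - 0\<bar>"
  proof (rule abs_diff_le_of_deriv_bound[OF g1_deriv])
    fix t assume "min x 0 \<le> t" "t \<le> max x 0"
    then have "\<bar>t\<bar> \<le> \<bar>x\<bar>" by auto
    then show "\<bar>g2 t\<bar> \<le> K * \<bar>x\<bar>"
      using abs_g2_le[of t] K_nonneg by (meson mult_left_mono order_trans)
  qed
  then show ?thesis using g1_0 by (simp add: power2_eq_square abs_mult_self mult.assoc)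
qed

lemma abs_g_add_le: "\<bar>g x + g y\<bar> \<le> K * (x\<^sup>2 + y\<^sup>2) * \<bar>x + y\<bar>"
proof -
  have "\<bar>g x - g (-y)\<bar> \<le> (K * (x\<^sup>2 + y\<^sup>2)) * \<bar>x - (-y)\<bar>"
  proof (rule abs_diff_le_of_deriv_bound[OF g_deriv])
    fix t assume "min x (-y) \<le> t" "t \<le> max x (-y)"
    then have "t\<^sup>2 \<le> x\<^sup>2 \<or> t\<^sup>2 \<le> y\<^sup>2" by (auto simp: abs_le_square_iff[symmetric])
    then have "t\<^sup>2 \<le> x\<^sup>2 + y\<^sup>2" by (smt (verit) zero_le_power2)
    then show "\<bar>g1 t\<bar> \<le> K * (x\<^sup>2 + y\<^sup>2)"
      using abs_g1_le[of t] K_nonneg by (meson mult_left_mono order_trans)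
  qed
  then show ?thesis using g_odd[of y] by simp
qed

text \<open>\<open>diff3\<close> vanishes for \<open>u = 0\<close>, its partial derivative \<open>diff3_u\<close> for \<open>v = 0\<close> and
  \<open>diff3_uv\<close> for \<open>w = 0\<close>; as the mixed third derivative \<open>diff3_uvw\<close> is bounded, three mean
  value estimates give \<open>|diff3 u v w| \<lesssim> |u v w|\<close>. At \<open>(a + b, a + c, a + d)\<close> with
  \<open>a + b + c + d = 0\<close>, \<open>diff3\<close> is the four-term sum \<open>g a + g b + g c + g d\<close>.\<close>

definition "diff3 u v w = g ((u+v+w)/2) - g ((v+w-u)/2) - g ((u+w-v)/2) - g ((u+v-w)/2)"
definition "diff3_u u v w = (g1 ((u+v+w)/2) + g1 ((v+w-u)/2) - g1 ((u+w-v)/2) - g1 ((u+v-w)/2))/2"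
definition "diff3_uv u v w = (g2 ((u+v+w)/2) + g2 ((v+w-u)/2) + g2 ((u+w-v)/2) - g2 ((u+v-w)/2))/4"
definition "diff3_uvw u v w = (g3 ((u+v+w)/2) + g3 ((v+w-u)/2) + g3 ((u+w-v)/2) + g3 ((u+v-w)/2))/8"

lemma diff3_deriv_u: "((\<lambda>t. diff3 t v w) has_real_derivative diff3_u u v w) (at u)"
  unfolding diff3_def diff3_u_def
  by (auto intro!: derivative_eq_intros DERIV_chain2[OF g_deriv] simp: field_simps)

lemma diff3_u_deriv_v: "((\<lambda>t. diff3_u u t w) has_real_derivative diff3_uv u v w) (at v)"
  unfolding diff3_u_def diff3_uv_def
  by (auto intro!: derivative_eq_intros DERIV_chain2[OF g1_deriv] simp: field_simps)

lemma diff3_uv_deriv_w: "((\<lambda>t. diff3_uv u v t) has_real_derivative diff3_uvw u v w) (at w)"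
  unfolding diff3_uv_def diff3_uvw_def
  by (auto intro!: derivative_eq_intros DERIV_chain2[OF g2_deriv] simp: field_simps)

lemma diff3_0: "diff3 0 v w = 0"
proof -
  have reflect: "(v - w)/2 = - ((w - v)/2)" by (simp add: field_simps)
  show ?thesis unfolding diff3_def by (simp add: reflect g_odd add.commute)
qed

lemma diff3_u_0: "diff3_u u 0 w = 0"
proof -
  have reflect: "(w - u)/2 = - ((u - w)/2)" by (simp add: field_simps)
  show ?thesis unfolding diff3_u_def by (simp add: reflect g1_even add.commute)
qed

lemma diff3_uv_0: "diff3_uv u v 0 = 0"
proof -
  have reflect: "(v - u)/2 = - ((u - v)/2)" by (simp add: field_simps)
  show ?thesis unfolding diff3_uv_def by (simp add: reflect g2_odd add.commute)
qed

lemma abs_diff3_uvw_le: "\<bar>diff3_uvw u v w\<bar> \<le> K/2"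
  unfolding diff3_uvw_def
  using abs_g3_le[of "(u+v+w)/2"] abs_g3_le[of "(v+w-u)/2"] abs_g3_le[of "(u+w-v)/2"]
    abs_g3_le[of "(u+v-w)/2"]
  by simp

lemma abs_diff3_uv_le: "\<bar>diff3_uv u v w\<bar> \<le> K/2 * \<bar>w\<bar>"
  using abs_diff_le_of_deriv_bound[OF diff3_uv_deriv_w, where x = w and y = 0 and B = "K/2"]
    abs_diff3_uvw_le diff3_uv_0
  by simp

lemma abs_diff3_u_le: "\<bar>diff3_u u v w\<bar> \<le> K/2 * \<bar>w\<bar> * \<bar>v\<bar>"
  using abs_diff_le_of_deriv_bound[OF diff3_u_deriv_v, where x = v and y = 0 and B = "K/2 * \<bar>w\<bar>"]
    abs_diff3_uv_le diff3_u_0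
  by simp

lemma abs_diff3_le: "\<bar>diff3 u v w\<bar> \<le> K/2 * \<bar>w\<bar> * \<bar>v\<bar> * \<bar>u\<bar>"
  using abs_diff_le_of_deriv_bound[OF diff3_deriv_u, where x = u and y = 0
      and B = "K/2 * \<bar>w\<bar> * \<bar>v\<bar>"] abs_diff3_u_le diff3_0
  by simp

lemma abs_g_four_le:
  assumes "a + b + c + d = 0"
  shows "\<bar>g a + g b + g c + g d\<bar> \<le> K/2 * \<bar>(a + b) * (a + c) * (a + d)\<bar>"
proof -
  have shifts: "((a+b) + (a+c) + (a+d))/2 = a" "((a+c) + (a+d) - (a+b))/2 = -b"
    "((a+b) + (a+d) - (a+c))/2 = -c" "((a+b) + (a+c) - (a+d))/2 = -d"
    using assms by simp_all
  have "diff3 (a+b) (a+c) (a+d) = g a + g b + g c + g d"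
    unfolding diff3_def shifts g_odd by simp
  then show ?thesis using abs_diff3_le[of "a+b" "a+c" "a+d"] by (simp add: abs_mult mult_ac)
qed

end

lemma abs_mult_le_sq:
  fixes x y z :: real
  assumes "\<bar>y\<bar> \<le> \<bar>x\<bar>" and "\<bar>z\<bar> \<le> \<bar>x\<bar>"
  shows "\<bar>y * z\<bar> \<le> x\<^sup>2"
proof -
  have "\<bar>y\<bar> * \<bar>z\<bar> \<le> \<bar>x\<bar> * \<bar>x\<bar>" using assms by (intro mult_mono) auto
  then show ?thesis by (simp add: abs_mult power2_eq_square)
qed

lemma abs_cube_le_mult_sq:
  fixes x y :: real
  assumes "\<bar>y\<bar> \<le> \<bar>x\<bar>"
  shows "\<bar>y ^ 3\<bar> \<le> \<bar>y\<bar> * x\<^sup>2"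
proof -
  have "\<bar>y\<bar> * y\<^sup>2 \<le> \<bar>y\<bar> * x\<^sup>2" using assms by (simp add: abs_le_square_iff mult_left_mono)
  then show ?thesis by (simp add: power3_eq_cube power2_eq_square abs_mult)
qed

lemma abs_add_cubes_ge:
  fixes x y :: real
  shows "\<bar>x + y\<bar> * x\<^sup>2 / 2 \<le> \<bar>x ^ 3 + y ^ 3\<bar>"
proof -
  have factor: "x ^ 3 + y ^ 3 = (x + y) * (x\<^sup>2 - x * y + y\<^sup>2)"
    by (simp add: algebra_simps power2_eq_square power3_eq_cube)
  have "x\<^sup>2 - x * y + y\<^sup>2 - x\<^sup>2 / 2 = ((x - y)\<^sup>2 + y\<^sup>2) / 2"
    by (simp add: power2_eq_square field_simps)
  moreover have "0 \<le> ((x - y)\<^sup>2 + y\<^sup>2) / 2" by simp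
  ultimately have q: "x\<^sup>2 / 2 \<le> x\<^sup>2 - x * y + y\<^sup>2" by linarith
  then have "\<bar>x + y\<bar> * (x\<^sup>2 / 2) \<le> \<bar>x + y\<bar> * (x\<^sup>2 - x * y + y\<^sup>2)"
    by (rule mult_left_mono) simp
  moreover have "0 \<le> x\<^sup>2 - x * y + y\<^sup>2" using q zero_le_power2[of x] by linarith
  ultimately show ?thesis unfolding factor abs_mult by simp
qed

lemma abs_sum_three_cubes_ge:
  fixes a b c :: real
  assumes b: "\<bar>b\<bar> \<le> \<bar>a\<bar>" and c: "\<bar>c\<bar> \<le> \<bar>a\<bar>"
  shows "3 * \<bar>a * b * c\<bar> - 6 * a\<^sup>2 * \<bar>a + b + c\<bar> \<le> \<bar>a ^ 3 + b ^ 3 + c ^ 3\<bar>"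
proof -
  define W where "W = a\<^sup>2 + b\<^sup>2 + c\<^sup>2 - a * b - b * c - c * a"
  have factor: "a ^ 3 + b ^ 3 + c ^ 3 = 3 * (a * b * c) + (a + b + c) * W"
    unfolding W_def by (simp add: algebra_simps power2_eq_square power3_eq_cube)
  have "b\<^sup>2 \<le> a\<^sup>2" "c\<^sup>2 \<le> a\<^sup>2" using b c by (simp_all add: abs_le_square_iff)
  moreover have "\<bar>a * b\<bar> \<le> a\<^sup>2" "\<bar>b * c\<bar> \<le> a\<^sup>2" "\<bar>c * a\<bar> \<le> a\<^sup>2"
    using b c by (auto intro!: abs_mult_le_sq)
  ultimately have "\<bar>W\<bar> \<le> 6 * a\<^sup>2"
    unfolding W_def abs_le_iff using zero_le_power2[of b] zero_le_power2[of c] by linarith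
  then have "\<bar>(a + b + c) * W\<bar> \<le> 6 * a\<^sup>2 * \<bar>a + b + c\<bar>"
    unfolding abs_mult using mult_left_mono[of "\<bar>W\<bar>" "6 * a\<^sup>2" "\<bar>a + b + c\<bar>"] by (simp add: mult_ac)
  then show ?thesis unfolding factor by linarith
qed

lemma sum_four_cubes_eq:
  fixes a b c d :: real
  assumes "a + b + c + d = 0"
  shows "a ^ 3 + b ^ 3 + c ^ 3 + d ^ 3 = 3 * ((a + b) * (a + c) * (a + d))"
proof -
  have d: "d = - (a + b + c)" using assms by linarith
  show ?thesis unfolding d by (simp add: algebra_simps power3_eq_cube)
qed

lemma abs_cube_diff_le:
  fixes x y M :: real
  assumes "\<bar>x\<bar> \<le> M" and "\<bar>y\<bar> \<le> M"
  shows "\<bar>x ^ 3 - y ^ 3\<bar> \<le> 3 * M\<^sup>2 * \<bar>x - y\<bar>"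
proof -
  have factor: "x ^ 3 - y ^ 3 = (x - y) * (x\<^sup>2 + x * y + y\<^sup>2)"
    by (simp add: algebra_simps power2_eq_square power3_eq_cube)
  have "x\<^sup>2 \<le> M\<^sup>2" "y\<^sup>2 \<le> M\<^sup>2"
    using assms power_mono[of "\<bar>x\<bar>" M 2] power_mono[of "\<bar>y\<bar>" M 2] by simp_all
  moreover have "\<bar>x * y\<bar> \<le> M\<^sup>2"
    using assms mult_mono[of "\<bar>x\<bar>" M "\<bar>y\<bar>" M] by (simp add: abs_mult power2_eq_square)
  ultimately have "\<bar>x\<^sup>2 + x * y + y\<^sup>2\<bar> \<le> 3 * M\<^sup>2"
    using zero_le_power2[of x] zero_le_power2[of y] by linarith
  then show ?thesis
    unfolding factor abs_mult
    using mult_left_mono[of "\<bar>x\<^sup>2 + x * y + y\<^sup>2\<bar>" "3 * M\<^sup>2" "\<bar>x - y\<bar>"] by (simp add: mult_ac)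
qed

lemma abs_prod_shift_le:
  fixes a b c d d' :: real
  assumes "\<bar>b\<bar> \<le> \<bar>a\<bar>" and "\<bar>c\<bar> \<le> \<bar>a\<bar>"
  shows "\<bar>a + b\<bar> * \<bar>a + c\<bar> * \<bar>a + d'\<bar> \<le> \<bar>a + b\<bar> * \<bar>a + c\<bar> * \<bar>a + d\<bar> + 4 * a\<^sup>2 * \<bar>d - d'\<bar>"
proof -
  have "\<bar>a + b\<bar> * \<bar>a + c\<bar> \<le> (2 * \<bar>a\<bar>) * (2 * \<bar>a\<bar>)"
    using assms by (intro mult_mono) auto
  then have "\<bar>a + b\<bar> * \<bar>a + c\<bar> * \<bar>d - d'\<bar> \<le> 4 * a\<^sup>2 * \<bar>d - d'\<bar>"
    by (simp add: mult_right_mono power2_eq_square)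
  moreover have "\<bar>a + b\<bar> * \<bar>a + c\<bar> * \<bar>a + d'\<bar> \<le> \<bar>a + b\<bar> * \<bar>a + c\<bar> * (\<bar>a + d\<bar> + \<bar>d - d'\<bar>)"
    by (intro mult_left_mono) auto
  ultimately show ?thesis by (simp add: algebra_simps)
qed

lemma abs_sum_four_cubes_ge:
  fixes a b c d :: real
  assumes b: "\<bar>b\<bar> \<le> \<bar>a\<bar>" and c: "\<bar>c\<bar> \<le> \<bar>a\<bar>" and d: "\<bar>d\<bar> \<le> \<bar>a\<bar>"
    and near_zero: "\<bar>a + b + c + d\<bar> \<le> 2 * \<bar>a\<bar>"
  shows "3 * (\<bar>a + b\<bar> * \<bar>a + c\<bar> * \<bar>a + d\<bar>) - 39 * (a\<^sup>2 * \<bar>a + b + c + d\<bar>)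
    \<le> \<bar>a ^ 3 + b ^ 3 + c ^ 3 + d ^ 3\<bar>"
proof -
  define \<epsilon> where "\<epsilon> = a + b + c + d"
  define d' where "d' = d - \<epsilon>"
  have "\<bar>a ^ 3 + b ^ 3 + c ^ 3 + d' ^ 3\<bar> = 3 * (\<bar>a + b\<bar> * \<bar>a + c\<bar> * \<bar>a + d'\<bar>)"
    using sum_four_cubes_eq[of a b c d'] unfolding d'_def \<epsilon>_def by (simp add: abs_mult)
  moreover have "\<bar>a + b\<bar> * \<bar>a + c\<bar> * \<bar>a + d\<bar> \<le> \<bar>a + b\<bar> * \<bar>a + c\<bar> * \<bar>a + d'\<bar> + 4 * a\<^sup>2 * \<bar>\<epsilon>\<bar>"
    using abs_prod_shift_le[OF b c, where d = d' and d' = d] unfolding d'_def by simp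
  moreover have "\<bar>d' ^ 3 - d ^ 3\<bar> \<le> 27 * a\<^sup>2 * \<bar>\<epsilon>\<bar>"
  proof -
    have "\<bar>d'\<bar> \<le> 3 * \<bar>a\<bar>" "\<bar>d\<bar> \<le> 3 * \<bar>a\<bar>" using d near_zero unfolding d'_def \<epsilon>_def by linarith+
    from abs_cube_diff_le[OF this] show ?thesis unfolding d'_def by (simp add: power_mult_distrib)
  qed
  ultimately show ?thesis unfolding \<epsilon>_def [symmetric] by linarith
qed

lemma abs_add_ge_diff:
  fixes u v :: real
  shows "\<bar>u\<bar> - \<bar>v\<bar> \<le> \<bar>u + v\<bar>"
  using abs_triangle_ineq2[of u "-v"] by simp

lemma abs_add3_le:
  fixes x y z :: real
  shows "\<bar>x + y + z\<bar> \<le> \<bar>x\<bar> + \<bar>y\<bar> + \<bar>z\<bar>"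
  using abs_triangle_ineq[of "x + y" z] abs_triangle_ineq[of x y] by linarith

lemma le_mult_chain:
  fixes S Z A B M \<alpha> :: real
  assumes "S \<le> A * Z" and "Z \<le> B * \<bar>\<alpha>\<bar>" and "0 \<le> A" and "A * B \<le> M"
  shows "S \<le> M * \<bar>\<alpha>\<bar>"
proof -
  have "A * Z \<le> (A * B) * \<bar>\<alpha>\<bar>" using assms mult_left_mono[of Z "B * \<bar>\<alpha>\<bar>" A] by simp
  also have "\<dots> \<le> M * \<bar>\<alpha>\<bar>" using assms by (intro mult_right_mono) auto
  finally show ?thesis using assms by linarith
qed

text \<open>\<open>f\<close> stands for the symbol \<open>\<xi> \<mapsto> m(\<xi>)\<^sup>2 \<xi>\<^sup>3\<close>, which equals \<open>\<xi>\<^sup>3\<close> below the scale \<open>N\<close>.\<close>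

locale symbol_estimates =
  fixes f :: "real \<Rightarrow> real" and K N :: real
  assumes K_nonneg: "0 \<le> K"
    and abs_f_le: "\<And>t. \<bar>f t\<bar> \<le> \<bar>t\<bar> ^ 3"
    and f_eq_cube: "\<And>t. \<bar>t\<bar> \<le> N \<Longrightarrow> f t = t ^ 3"
    and f_odd: "\<And>t. f (-t) = - f t"
    and abs_f_add_le: "\<And>x y. \<bar>f x + f y\<bar> \<le> K * (x\<^sup>2 + y\<^sup>2) * \<bar>x + y\<bar>"
    and abs_f_four_le: "\<And>a b c d. a + b + c + d = 0 \<Longrightarrow>
      \<bar>f a + f b + f c + f d\<bar> \<le> K/2 * \<bar>(a + b) * (a + c) * (a + d)\<bar>"

lemma symbol_estimates_rescale:
  assumes est: "symbol_estimates f K 1" and N: "0 < N"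
  shows "symbol_estimates (\<lambda>t. N ^ 3 * f (t / N)) K N"
proof -
  interpret symbol_estimates f K 1 by (fact est)
  have N3: "0 < N ^ 3" using N by simp
  have scale: "\<bar>N ^ 3 * u\<bar> \<le> N ^ 3 * v \<longleftrightarrow> \<bar>u\<bar> \<le> v" for u v
    using N3 by (simp add: abs_mult)
  show ?thesis
  proof unfold_locales
    show "\<bar>N ^ 3 * f (t / N)\<bar> \<le> \<bar>t\<bar> ^ 3" for t
      using abs_f_le[of "t / N"] N3
      by (simp add: power_divide abs_mult pos_le_divide_eq mult.commute)
    show "N ^ 3 * f (t / N) = t ^ 3" if "\<bar>t\<bar> \<le> N" for t
      using f_eq_cube[of "t / N"] that N by (simp add: power_divide)
    show "N ^ 3 * f (- t / N) = - (N ^ 3 * f (t / N))" for t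
      using f_odd[of "t / N"] by simp
    show "\<bar>N ^ 3 * f (x / N) + N ^ 3 * f (y / N)\<bar> \<le> K * (x\<^sup>2 + y\<^sup>2) * \<bar>x + y\<bar>" for x y
    proof -
      have "K * (x\<^sup>2 + y\<^sup>2) * \<bar>x + y\<bar>
          = N ^ 3 * (K * ((x / N)\<^sup>2 + (y / N)\<^sup>2) * \<bar>x / N + y / N\<bar>)"
        using N
        by (simp add: power_divide add_divide_distrib[symmetric] power2_eq_square power3_eq_cube
            field_simps)
      then show ?thesis
        using abs_f_add_le[of "x / N" "y / N"] by (simp only: scale distrib_left[symmetric])
    qed
    show "\<bar>N ^ 3 * f (a / N) + N ^ 3 * f (b / N) + N ^ 3 * f (c / N) + N ^ 3 * f (d / N)\<bar>
        \<le> K / 2 * \<bar>(a + b) * (a + c) * (a + d)\<bar>" if "a + b + c + d = 0" for a b c d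
    proof -
      have "a / N + b / N + c / N + d / N = 0"
        using that by (simp add: add_divide_distrib[symmetric])
      moreover have "K / 2 * \<bar>(a + b) * (a + c) * (a + d)\<bar>
          = N ^ 3 * (K / 2 * \<bar>(a / N + b / N) * (a / N + c / N) * (a / N + d / N)\<bar>)"
        using N by (simp add: add_divide_distrib[symmetric] abs_mult power3_eq_cube field_simps)
      ultimately show ?thesis using abs_f_four_le by (simp only: scale distrib_left[symmetric])
    qed
  qed (rule K_nonneg)
qed

context symbol_estimates
begin

lemma abs_f_diff_le: "\<bar>f x - f y\<bar> \<le> K * (x\<^sup>2 + y\<^sup>2) * \<bar>x - y\<bar>"
  using abs_f_add_le[of x "-y"] by (simp add: f_odd)

lemma abs_f_add_le_sorted:
  assumes "\<bar>y\<bar> \<le> \<bar>x\<bar>"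
  shows "\<bar>f x + f y\<bar> \<le> 2 * K * x\<^sup>2 * \<bar>x + y\<bar>"
proof -
  have "K * (x\<^sup>2 + y\<^sup>2) * \<bar>x + y\<bar> \<le> K * (2 * x\<^sup>2) * \<bar>x + y\<bar>"
    using assms K_nonneg by (intro mult_right_mono mult_left_mono) (auto simp: abs_le_square_iff)
  then show ?thesis using abs_f_add_le[of x y] by simp
qed

lemma abs_f_le_cube_of_le:
  assumes "\<bar>t\<bar> \<le> \<bar>x\<bar>"
  shows "\<bar>f t\<bar> \<le> \<bar>x\<bar> ^ 3"
  using abs_f_le[of t] power_mono[OF assms abs_ge_zero, of 3] by linarith

lemma abs_f_le_mult_sq: "\<bar>y\<bar> \<le> \<bar>x\<bar> \<Longrightarrow> \<bar>f y\<bar> \<le> \<bar>y\<bar> * x\<^sup>2"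
  using abs_f_le[of y] abs_cube_le_mult_sq[of y x] by (simp add: power_abs)

lemma abs_f_four_le_near_zero:
  assumes b: "\<bar>b\<bar> \<le> \<bar>a\<bar>" and c: "\<bar>c\<bar> \<le> \<bar>a\<bar>" and d: "\<bar>d\<bar> \<le> \<bar>a\<bar>"
    and near_zero: "\<bar>a + b + c + d\<bar> \<le> 2 * \<bar>a\<bar>"
  shows "\<bar>f a + f b + f c + f d\<bar>
    \<le> K/2 * (\<bar>a + b\<bar> * \<bar>a + c\<bar> * \<bar>a + d\<bar>) + 12 * K * (a\<^sup>2 * \<bar>a + b + c + d\<bar>)"
proof -
  define \<epsilon> where "\<epsilon> = a + b + c + d"
  define d' where "d' = d - \<epsilon>"
  have "\<bar>f a + f b + f c + f d'\<bar> \<le> K/2 * (\<bar>a + b\<bar> * \<bar>a + c\<bar> * \<bar>a + d'\<bar>)"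
    using abs_f_four_le[of a b c d'] unfolding d'_def \<epsilon>_def by (simp add: abs_mult)
  also have "\<dots> \<le> K/2 * (\<bar>a + b\<bar> * \<bar>a + c\<bar> * \<bar>a + d\<bar> + 4 * a\<^sup>2 * \<bar>\<epsilon>\<bar>)"
    using abs_prod_shift_le[OF b c, where d = d and d' = d'] K_nonneg unfolding d'_def
    by (intro mult_left_mono) auto
  finally have shifted: "\<bar>f a + f b + f c + f d'\<bar>
      \<le> K/2 * (\<bar>a + b\<bar> * \<bar>a + c\<bar> * \<bar>a + d\<bar>) + 2 * K * a\<^sup>2 * \<bar>\<epsilon>\<bar>"
    by (simp add: algebra_simps)
  have "d\<^sup>2 + d'\<^sup>2 \<le> 10 * a\<^sup>2"
  proof -
    have "\<bar>d'\<bar> \<le> \<bar>3 * a\<bar>" using d near_zero unfolding d'_def \<epsilon>_def by linarith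
    then show ?thesis using d by (simp add: abs_le_square_iff power_mult_distrib)
  qed
  then have "K * (d\<^sup>2 + d'\<^sup>2) * \<bar>d - d'\<bar> \<le> K * (10 * a\<^sup>2) * \<bar>d - d'\<bar>"
    using K_nonneg by (intro mult_right_mono mult_left_mono) auto
  then have "\<bar>f d - f d'\<bar> \<le> 10 * K * a\<^sup>2 * \<bar>\<epsilon>\<bar>"
    using abs_f_diff_le[of d d'] unfolding d'_def by (simp add: mult_ac)
  with shifted show ?thesis unfolding \<epsilon>_def [symmetric] by linarith
qed

text \<open>\<open>a, \<dots>, h\<close> are the frequencies \<open>\<xi>\<^sub>1\<^sup>*, \<dots>, \<xi>\<^sub>6\<^sup>*\<close> ordered by size, with \<open>h = 0\<close> when
  \<open>k = 3\<close>; \<open>c0\<close> is the constant implicit in \<open>\<ll>\<close>.\<close>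

context
  fixes a b c d e h c0 :: real
  assumes zero_sum: "a + b + c + d + e + h = 0"
    and sorted: "\<bar>b\<bar> \<le> \<bar>a\<bar>" "\<bar>c\<bar> \<le> \<bar>b\<bar>" "\<bar>d\<bar> \<le> \<bar>c\<bar>" "\<bar>e\<bar> \<le> \<bar>d\<bar>" "\<bar>h\<bar> \<le> \<bar>e\<bar>"
    and c0: "100 \<le> c0"
begin

lemma div_c0_le: "0 \<le> Z \<Longrightarrow> Z / c0 \<le> Z / 100"
  using c0 by (intro divide_left_mono) auto

lemma sorted_le_a: "\<bar>c\<bar> \<le> \<bar>a\<bar>" "\<bar>d\<bar> \<le> \<bar>a\<bar>" "\<bar>e\<bar> \<le> \<bar>a\<bar>" "\<bar>h\<bar> \<le> \<bar>a\<bar>"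
  using sorted by linarith+

lemma Omega1_head:
  assumes small: "\<bar>d\<bar> \<le> \<bar>c\<bar> / c0"
  shows "\<bar>a + b + c\<bar> \<le> 3 * (\<bar>c\<bar> / c0)" and "\<bar>a + b + c\<bar> \<le> \<bar>c\<bar>"
proof -
  have "\<bar>a + b + c\<bar> \<le> 3 * \<bar>d\<bar>" using zero_sum sorted(4,5) by linarith
  then show "\<bar>a + b + c\<bar> \<le> 3 * (\<bar>c\<bar> / c0)" "\<bar>a + b + c\<bar> \<le> \<bar>c\<bar>"
    using small div_c0_le[of "\<bar>c\<bar>"] by linarith+
qed

lemma Omega1_tail:
  assumes small: "\<bar>d\<bar> \<le> \<bar>c\<bar> / c0"
  shows "\<bar>d\<bar> * a\<^sup>2 + \<bar>e\<bar> * a\<^sup>2 + \<bar>h\<bar> * a\<^sup>2 \<le> 3 * (a\<^sup>2 * \<bar>c\<bar> / c0)"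
proof -
  have tail: "\<bar>t\<bar> * a\<^sup>2 \<le> a\<^sup>2 * \<bar>c\<bar> / c0" if "\<bar>t\<bar> \<le> \<bar>d\<bar>" for t
  proof -
    have "\<bar>t\<bar> * a\<^sup>2 \<le> (\<bar>c\<bar> / c0) * a\<^sup>2" using that small by (intro mult_right_mono) auto
    then show ?thesis by (simp add: field_simps)
  qed
  have "\<bar>h\<bar> \<le> \<bar>d\<bar>" using sorted(4,5) by linarith
  from tail[OF this] show ?thesis using tail[OF order_refl] tail[OF sorted(4)] by linarith
qed

lemma Omega1_cubes_ge:
  assumes small: "\<bar>d\<bar> \<le> \<bar>c\<bar> / c0"
  shows "a\<^sup>2 * \<bar>c\<bar> \<le> 2 * \<bar>a^3 + b^3 + c^3 + d^3 + e^3 + h^3\<bar>"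
proof -
  define Z where "Z = a\<^sup>2 * \<bar>c\<bar>"
  have Z0: "0 \<le> Z" unfolding Z_def by simp
  have "\<bar>a\<bar> \<le> 3 * \<bar>b\<bar>" using Omega1_head(2)[OF small] sorted(2) by linarith
  then have "\<bar>a\<bar> * \<bar>a\<bar> * \<bar>c\<bar> \<le> 3 * \<bar>b\<bar> * \<bar>a\<bar> * \<bar>c\<bar>" by (intro mult_right_mono) auto
  then have "Z \<le> 3 * \<bar>a * b * c\<bar>" unfolding Z_def by (simp add: abs_mult power2_eq_square mult_ac)
  moreover have "6 * a\<^sup>2 * \<bar>a + b + c\<bar> \<le> 18 * (Z / c0)"
    using mult_left_mono[OF Omega1_head(1)[OF small], of "6 * a\<^sup>2"] unfolding Z_def
    by (simp add: field_simps)
  moreover have "\<bar>d^3 + e^3 + h^3\<bar> \<le> 3 * (Z / c0)"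
    using abs_add3_le[of "d^3" "e^3" "h^3"] abs_cube_le_mult_sq[OF sorted_le_a(2)]
      abs_cube_le_mult_sq[OF sorted_le_a(3)] abs_cube_le_mult_sq[OF sorted_le_a(4)]
      Omega1_tail[OF small, folded Z_def]
    by linarith
  moreover have "\<bar>a^3 + b^3 + c^3 + d^3 + e^3 + h^3\<bar> = \<bar>(a^3 + b^3 + c^3) + (d^3 + e^3 + h^3)\<bar>"
    by (simp only: add.assoc)
  ultimately show ?thesis
    using abs_sum_three_cubes_ge[OF sorted(1) sorted_le_a(1)] div_c0_le[OF Z0] Z0
      abs_add_ge_diff[of "a^3 + b^3 + c^3" "d^3 + e^3 + h^3"] unfolding Z_def[symmetric] by linarith
qed

lemma Omega1_symbol_le:
  assumes small: "\<bar>d\<bar> \<le> \<bar>c\<bar> / c0"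
  shows "\<bar>f a + f b + f c + f d + f e + f h\<bar> \<le> (4 * K + 2) * (a\<^sup>2 * \<bar>c\<bar>)"
proof -
  define Z where "Z = a\<^sup>2 * \<bar>c\<bar>"
  have Z0: "0 \<le> Z" unfolding Z_def by simp
  have "2 * K * a\<^sup>2 * \<bar>a + b\<bar> \<le> 2 * K * a\<^sup>2 * (2 * \<bar>c\<bar>)"
    using Omega1_head(2)[OF small] K_nonneg by (intro mult_left_mono) auto
  then have "\<bar>f a + f b\<bar> \<le> 4 * K * Z"
    using abs_f_add_le_sorted[OF sorted(1)] unfolding Z_def by (simp add: mult_ac)
  moreover have "\<bar>f c\<bar> \<le> Z"
    using abs_f_le_mult_sq[OF sorted_le_a(1)] unfolding Z_def by (simp add: mult_ac)
  moreover have "\<bar>f d + f e + f h\<bar> \<le> 3 * (Z / c0)"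
    using abs_add3_le[of "f d" "f e" "f h"] abs_f_le_mult_sq[OF sorted_le_a(2)]
      abs_f_le_mult_sq[OF sorted_le_a(3)] abs_f_le_mult_sq[OF sorted_le_a(4)]
      Omega1_tail[OF small, folded Z_def]
    by linarith
  moreover have "\<bar>f a + f b + f c + f d + f e + f h\<bar> = \<bar>(f a + f b) + f c + (f d + f e + f h)\<bar>"
    by (simp only: add.assoc)
  ultimately show ?thesis
    using abs_add3_le[of "f a + f b" "f c" "f d + f e + f h"] div_c0_le[OF Z0] Z0
    unfolding Z_def[symmetric] by (simp add: algebra_simps)
qed

lemma Omega1_bound:
  assumes small: "\<bar>d\<bar> \<le> \<bar>c\<bar> / c0"
  shows "\<bar>f a + f b + f c + f d + f e + f h\<bar> \<le> 10 * (K + 1) * \<bar>a^3 + b^3 + c^3 + d^3 + e^3 + h^3\<bar>"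
  by (rule le_mult_chain[OF Omega1_symbol_le[OF small] Omega1_cubes_ge[OF small]])
    (use K_nonneg in auto)

lemma Omega2_bound:
  assumes low: "\<bar>c\<bar> \<le> N / c0"
    and small: "\<bar>c^3 + d^3 + e^3 + h^3\<bar> \<le> \<bar>a^3 + b^3\<bar> / c0"
  shows "\<bar>f a + f b + f c + f d + f e + f h\<bar> \<le> 10 * (K + 1) * \<bar>a^3 + b^3 + c^3 + d^3 + e^3 + h^3\<bar>"
proof -
  define Z where "Z = \<bar>a^3 + b^3\<bar>"
  have Z0: "0 \<le> Z" unfolding Z_def by simp
  have "0 \<le> N" using low c0 order_trans[OF abs_ge_zero low] by (simp add: zero_le_divide_iff)
  then have "\<bar>c\<bar> \<le> N" using low div_c0_le[of N] by linarith
  then have cubes: "f c = c^3" "f d = d^3" "f e = e^3" "f h = h^3"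
    using sorted(3-5) by (intro f_eq_cube; linarith)+
  have "\<bar>f a + f b\<bar> \<le> 2 * K * (a\<^sup>2 * \<bar>a + b\<bar>)"
    using abs_f_add_le_sorted[OF sorted(1)] by (simp add: mult_ac)
  also have "\<dots> \<le> 2 * K * (2 * Z)"
    using abs_add_cubes_ge[of a b] K_nonneg unfolding Z_def
    by (intro mult_left_mono) (auto simp: mult_ac)
  finally have two: "\<bar>f a + f b\<bar> \<le> 4 * K * Z" by simp
  have "\<bar>f a + f b + f c + f d + f e + f h\<bar> = \<bar>(f a + f b) + (c^3 + d^3 + e^3 + h^3)\<bar>"
    using cubes by (simp add: add.assoc)
  then have "\<bar>f a + f b + f c + f d + f e + f h\<bar> \<le> 4 * K * Z + Z"
    using abs_triangle_ineq[of "f a + f b" "c^3 + d^3 + e^3 + h^3"] two small[folded Z_def]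
      div_c0_le[OF Z0] Z0 by linarith
  then have upper: "\<bar>f a + f b + f c + f d + f e + f h\<bar> \<le> (4 * K + 1) * Z"
    by (simp add: algebra_simps)
  have "\<bar>a^3 + b^3 + c^3 + d^3 + e^3 + h^3\<bar> = \<bar>(a^3 + b^3) + (c^3 + d^3 + e^3 + h^3)\<bar>"
    by (simp only: add.assoc)
  then have lower: "Z \<le> 2 * \<bar>a^3 + b^3 + c^3 + d^3 + e^3 + h^3\<bar>"
    using abs_add_ge_diff[of "a^3 + b^3" "c^3 + d^3 + e^3 + h^3"] small[folded Z_def]
      div_c0_le[OF Z0] Z0 unfolding Z_def by linarith
  from upper lower show ?thesis by (rule le_mult_chain) (use K_nonneg in auto)
qed

lemma Omega3_bound:
  assumes small: "\<bar>c\<bar> \<le> \<bar>a\<bar> / c0" and small_sq: "\<bar>c\<bar>\<^sup>2 \<le> \<bar>a + b\<bar> * \<bar>a\<bar> / c0"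
  shows "\<bar>f a + f b + f c + f d + f e + f h\<bar> \<le> 10 * (K + 1) * \<bar>a^3 + b^3 + c^3 + d^3 + e^3 + h^3\<bar>"
proof -
  define Z where "Z = \<bar>a + b\<bar> * a\<^sup>2"
  have Z0: "0 \<le> Z" unfolding Z_def by simp
  have "\<bar>c\<bar> ^ 3 = \<bar>c\<bar> * \<bar>c\<bar>\<^sup>2" by (simp add: power3_eq_cube power2_eq_square)
  also have "\<dots> \<le> (\<bar>a\<bar> / c0) * (\<bar>a + b\<bar> * \<bar>a\<bar> / c0)"
    using small small_sq by (intro mult_mono) auto
  also have "\<dots> = Z / c0\<^sup>2" unfolding Z_def by (simp add: power2_eq_square field_simps)
  also have "\<dots> \<le> Z / 100"
    using c0 Z0 mult_mono[of 100 c0 1 c0] by (intro divide_left_mono) (auto simp: power2_eq_square)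
  finally have c3: "\<bar>c\<bar> ^ 3 \<le> Z / 100" .
  have le_c: "\<bar>d\<bar> \<le> \<bar>c\<bar>" "\<bar>e\<bar> \<le> \<bar>c\<bar>" "\<bar>h\<bar> \<le> \<bar>c\<bar>" using sorted(3-5) by linarith+
  have cube_le: "\<bar>t ^ 3\<bar> \<le> \<bar>c\<bar> ^ 3" if "\<bar>t\<bar> \<le> \<bar>c\<bar>" for t
    using power_mono[OF that abs_ge_zero, of 3] by (simp add: power_abs)
  have "\<bar>c^3 + d^3 + e^3 + h^3\<bar> \<le> \<bar>c^3 + d^3 + e^3\<bar> + \<bar>h^3\<bar>" by (rule abs_triangle_ineq)
  also have "\<dots> \<le> (\<bar>c^3\<bar> + \<bar>d^3\<bar> + \<bar>e^3\<bar>) + \<bar>h^3\<bar>" by (intro add_right_mono abs_add3_le)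
  also have "\<dots> \<le> (\<bar>c\<bar>^3 + \<bar>c\<bar>^3 + \<bar>c\<bar>^3) + \<bar>c\<bar>^3"
    by (intro add_mono cube_le order_refl le_c)
  finally have tail: "\<bar>c^3 + d^3 + e^3 + h^3\<bar> \<le> 4 * \<bar>c\<bar> ^ 3" by simp
  have "\<bar>f c + f d + f e + f h\<bar> \<le> \<bar>f c + f d + f e\<bar> + \<bar>f h\<bar>" by (rule abs_triangle_ineq)
  also have "\<dots> \<le> (\<bar>f c\<bar> + \<bar>f d\<bar> + \<bar>f e\<bar>) + \<bar>f h\<bar>" by (intro add_right_mono abs_add3_le)
  also have "\<dots> \<le> (\<bar>c\<bar>^3 + \<bar>c\<bar>^3 + \<bar>c\<bar>^3) + \<bar>c\<bar>^3"
    by (intro add_mono abs_f_le_cube_of_le order_refl le_c)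
  finally have f_tail: "\<bar>f c + f d + f e + f h\<bar> \<le> 4 * \<bar>c\<bar> ^ 3" by simp
  have "\<bar>a^3 + b^3 + c^3 + d^3 + e^3 + h^3\<bar> = \<bar>(a^3 + b^3) + (c^3 + d^3 + e^3 + h^3)\<bar>"
    by (simp only: add.assoc)
  then have lower: "Z \<le> 4 * \<bar>a^3 + b^3 + c^3 + d^3 + e^3 + h^3\<bar>"
    using abs_add_ge_diff[of "a^3 + b^3" "c^3 + d^3 + e^3 + h^3"]
      abs_add_cubes_ge[of a b, folded Z_def] tail c3 Z0
    by linarith
  have "\<bar>f a + f b + f c + f d + f e + f h\<bar> = \<bar>(f a + f b) + (f c + f d + f e + f h)\<bar>"
    by (simp only: add.assoc)
  moreover have "\<bar>f a + f b\<bar> \<le> 2 * K * Z"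
    using abs_f_add_le_sorted[OF sorted(1)] unfolding Z_def by (simp add: mult_ac)
  ultimately have "\<bar>f a + f b + f c + f d + f e + f h\<bar> \<le> 2 * K * Z + Z"
    using abs_triangle_ineq[of "f a + f b" "f c + f d + f e + f h"] f_tail c3 Z0 by linarith
  then have upper: "\<bar>f a + f b + f c + f d + f e + f h\<bar> \<le> (2 * K + 1) * Z"
    by (simp add: algebra_simps)
  from upper lower show ?thesis by (rule le_mult_chain) (use K_nonneg in auto)
qed

lemma Omega4_bound:
  assumes small: "\<bar>e\<bar> * a\<^sup>2 \<le> \<bar>a + b\<bar> * \<bar>a + c\<bar> * \<bar>a + d\<bar> / c0"
    and small_f: "\<bar>f e + f h\<bar> \<le> \<bar>f a + f b + f c + f d\<bar> / c0"
  shows "\<bar>f a + f b + f c + f d + f e + f h\<bar> \<le> 10 * (K + 1) * \<bar>a^3 + b^3 + c^3 + d^3 + e^3 + h^3\<bar>"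
proof -
  define P where "P = \<bar>a + b\<bar> * \<bar>a + c\<bar> * \<bar>a + d\<bar>"
  define W where "W = a\<^sup>2 * \<bar>a + b + c + d\<bar>"
  have P0: "0 \<le> P" unfolding P_def by simp
  have near_zero: "\<bar>a + b + c + d\<bar> \<le> 2 * \<bar>e\<bar>" using zero_sum sorted(5) by linarith
  then have "W \<le> 2 * (\<bar>e\<bar> * a\<^sup>2)"
    unfolding W_def using mult_left_mono[OF near_zero, of "a\<^sup>2"] by (simp add: mult_ac)
  then have W: "W \<le> 2 * (P / 100)" using small div_c0_le[OF P0] unfolding P_def by linarith
  have near_zero': "\<bar>a + b + c + d\<bar> \<le> 2 * \<bar>a\<bar>" using near_zero sorted_le_a(3) by linarith
  have "\<bar>f a + f b + f c + f d\<bar> \<le> K/2 * P + 12 * K * W"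
    using abs_f_four_le_near_zero[OF sorted(1) sorted_le_a(1,2) near_zero'] unfolding P_def W_def .
  also have "\<dots> \<le> K/2 * P + 12 * K * (2 * (P / 100))"
    using W K_nonneg by (intro add_left_mono mult_left_mono) auto
  also have "\<dots> \<le> K * P" using K_nonneg P0 by (simp add: algebra_simps)
  finally have four: "\<bar>f a + f b + f c + f d\<bar> \<le> K * P" .
  have "\<bar>f a + f b + f c + f d\<bar> / c0 \<le> \<bar>f a + f b + f c + f d\<bar> / 1"
    using c0 by (intro divide_left_mono) auto
  with small_f have "\<bar>f e + f h\<bar> \<le> \<bar>f a + f b + f c + f d\<bar>" by simp
  then have "\<bar>(f a + f b + f c + f d) + (f e + f h)\<bar> \<le> 2 * (K * P)"
    using abs_triangle_ineq[of "f a + f b + f c + f d" "f e + f h"] four by linarith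
  then have upper: "\<bar>f a + f b + f c + f d + f e + f h\<bar> \<le> (2 * K) * P"
    by (simp add: add.assoc mult.assoc)
  have "\<bar>e^3 + h^3\<bar> \<le> \<bar>e^3\<bar> + \<bar>h^3\<bar>" by (rule abs_triangle_ineq)
  also have "\<dots> \<le> \<bar>e\<bar> * a\<^sup>2 + \<bar>h\<bar> * a\<^sup>2"
    by (intro add_mono abs_cube_le_mult_sq sorted_le_a)
  also have "\<dots> \<le> 2 * (P / c0)"
    using small mult_right_mono[OF sorted(5), of "a\<^sup>2"] unfolding P_def by simp
  finally have tail: "\<bar>e^3 + h^3\<bar> \<le> 2 * (P / 100)" using div_c0_le[OF P0] by linarith
  have "\<bar>a^3 + b^3 + c^3 + d^3\<bar> - \<bar>e^3 + h^3\<bar> \<le> \<bar>a^3 + b^3 + c^3 + d^3 + e^3 + h^3\<bar>"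
    using abs_add_ge_diff[of "a^3 + b^3 + c^3 + d^3" "e^3 + h^3"] by (simp only: add.assoc)
  then have lower: "P \<le> \<bar>a^3 + b^3 + c^3 + d^3 + e^3 + h^3\<bar>"
    using abs_sum_four_cubes_ge[OF sorted(1) sorted_le_a(1,2) near_zero', folded P_def W_def]
      tail W P0 by linarith
  from upper show ?thesis by (rule le_mult_chain[where B = 1]) (use lower K_nonneg in auto)
qed

end

end

locale admissible_profile =
  fixes s :: real and \<mu> :: "real \<Rightarrow> real"
  assumes profile: "profile s \<mu>" and s_ge: "1/2 \<le> s" and s_less: "s < 1"
begin

lemma mu_even: "\<mu> (-x) = \<mu> x"
  and mu_pos: "0 < \<mu> x"
  and mu_le_one: "\<mu> x \<le> 1"
  and mu_eq_one: "\<bar>x\<bar> \<le> 1 \<Longrightarrow> \<mu> x = 1"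
  and mu_eq_powr: "2 < \<bar>x\<bar> \<Longrightarrow> \<mu> x = \<bar>x\<bar> powr (s - 1)"
  using profile unfolding profile_def by blast+

definition "mu1 = deriv \<mu>"
definition "mu2 = deriv mu1"
definition "mu3 = deriv mu2"

lemma mu_iterated_deriv_differentiable: "(deriv ^^ n) \<mu> differentiable (at x)"
  using profile unfolding profile_def smooth_fun_def by blast

lemma mu_deriv: "(\<mu> has_real_derivative mu1 x) (at x)"
  using mu_iterated_deriv_differentiable[of 0 x] unfolding mu1_def
  by (simp add: DERIV_deriv_iff_real_differentiable)

lemma mu1_deriv: "(mu1 has_real_derivative mu2 x) (at x)"
  using mu_iterated_deriv_differentiable[of 1 x] unfolding mu1_def mu2_def
  by (simp add: DERIV_deriv_iff_real_differentiable)

lemma mu2_deriv: "(mu2 has_real_derivative mu3 x) (at x)"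
  using mu_iterated_deriv_differentiable[of 2 x] unfolding mu1_def mu2_def mu3_def
  by (simp add: DERIV_deriv_iff_real_differentiable numeral_2_eq_2)

lemma mu_derivs_isCont: "isCont \<mu> x" "isCont mu1 x" "isCont mu2 x" "isCont mu3 x"
proof -
  show "isCont \<mu> x" "isCont mu1 x" "isCont mu2 x"
    by (rule DERIV_isCont, rule mu_deriv mu1_deriv mu2_deriv)+
  show "isCont mu3 x"
    using mu_iterated_deriv_differentiable[of 3 x] unfolding mu1_def mu2_def mu3_def
    by (simp add: numeral_3_eq_3 differentiable_imp_continuous_within)
qed

definition "g x = (\<mu> x)\<^sup>2 * x ^ 3"
definition "g1 x = 2 * \<mu> x * mu1 x * x ^ 3 + 3 * (\<mu> x)\<^sup>2 * x\<^sup>2"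
definition "g2 x = 2 * (mu1 x)\<^sup>2 * x ^ 3 + 2 * \<mu> x * mu2 x * x ^ 3 + 12 * \<mu> x * mu1 x * x\<^sup>2
  + 6 * (\<mu> x)\<^sup>2 * x"
definition "g3 x = 6 * mu1 x * mu2 x * x ^ 3 + 2 * \<mu> x * mu3 x * x ^ 3 + 18 * (mu1 x)\<^sup>2 * x\<^sup>2
  + 18 * \<mu> x * mu2 x * x\<^sup>2 + 36 * \<mu> x * mu1 x * x + 6 * (\<mu> x)\<^sup>2"

lemma g_deriv: "(g has_real_derivative g1 x) (at x)"
  unfolding g_def g1_def
  by (auto intro!: derivative_eq_intros mu_deriv
      simp: power2_eq_square power3_eq_cube algebra_simps)

lemma g1_deriv: "(g1 has_real_derivative g2 x) (at x)"
  unfolding g1_def g2_def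
  by (auto intro!: derivative_eq_intros mu_deriv mu1_deriv
      simp: power2_eq_square power3_eq_cube algebra_simps)

lemma g2_deriv: "(g2 has_real_derivative g3 x) (at x)"
  unfolding g2_def g3_def
  by (auto intro!: derivative_eq_intros mu_deriv mu1_deriv mu2_deriv
      simp: power2_eq_square power3_eq_cube algebra_simps)

lemma g_odd: "g (-x) = - g x"
  unfolding g_def by (simp add: mu_even)

lemma g3_even: "g3 (-x) = g3 x"
proof -
  have g1_even: "g1 (-y) = g1 y" for y using DERIV_reflect[OF g_deriv, of "-1"] g_odd by simp
  have g2_odd: "g2 (-y) = - g2 y" for y using DERIV_reflect[OF g1_deriv, of 1] g1_even by simp
  show ?thesis using DERIV_reflect[OF g2_deriv, of "-1"] g2_odd by simp
qed

lemma g_eq_powr: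
  assumes "2 < y"
  shows "g y = y powr (2 * s + 1)"
proof -
  have "g y = (y powr (s - 1))\<^sup>2 * y powr 3"
    using mu_eq_powr[of y] powr_realpow[of y 3] assms unfolding g_def by simp
  also have "\<dots> = y powr ((s - 1) + (s - 1) + 3)" by (simp only: power2_eq_square powr_add)
  finally show ?thesis by (simp add: algebra_simps)
qed

lemma g1_eq_powr:
  assumes "2 < y"
  shows "g1 y = (2 * s + 1) * y powr (2 * s)"
proof -
  have "((\<lambda>y. y powr (2 * s + 1)) has_real_derivative (2 * s + 1) * y powr (2 * s + 1 - 1)) (at y)"
    by (rule has_real_derivative_powr) (use assms in auto)
  from DERIV_eq_of_eq_on_open[of "{2<..}" y g, OF _ _ _ g_deriv this] show ?thesis
    using assms g_eq_powr by auto
qed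

lemma g2_eq_powr:
  assumes "2 < y"
  shows "g2 y = (2 * s + 1) * (2 * s) * y powr (2 * s - 1)"
proof -
  have "((\<lambda>y. (2 * s + 1) * y powr (2 * s)) has_real_derivative
      (2 * s + 1) * ((2 * s) * y powr (2 * s - 1))) (at y)"
    by (rule DERIV_cmult, rule has_real_derivative_powr) (use assms in auto)
  from DERIV_eq_of_eq_on_open[of "{2<..}" y g1, OF _ _ _ g1_deriv this] show ?thesis
    using assms g1_eq_powr by auto
qed

lemma g3_eq_powr:
  assumes "2 < y"
  shows "g3 y = (2 * s + 1) * (2 * s) * (2 * s - 1) * y powr (2 * s - 2)"
proof -
  have "((\<lambda>y. (2 * s + 1) * (2 * s) * y powr (2 * s - 1)) has_real_derivative
      (2 * s + 1) * (2 * s) * ((2 * s - 1) * y powr (2 * s - 1 - 1))) (at y)"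
    by (rule DERIV_cmult, rule has_real_derivative_powr) (use assms in auto)
  from DERIV_eq_of_eq_on_open[of "{2<..}" y g2, OF _ _ _ g2_deriv this] show ?thesis
    using assms g2_eq_powr by (auto simp: mult.assoc)
qed

lemma abs_g3_le_six:
  assumes "2 < \<bar>y\<bar>"
  shows "\<bar>g3 y\<bar> \<le> 6"
proof -
  have "g3 y = g3 \<bar>y\<bar>" using g3_even[of y] by (auto simp: abs_if)
  have "\<bar>y\<bar> powr (2 * s - 2) \<le> 1"
    using powr_mono[of "2 * s - 2" 0 "\<bar>y\<bar>"] assms s_less by (auto split: if_splits)
  moreover have "(2 * s + 1) * (2 * s) \<le> 3 * 2" using s_ge s_less by (intro mult_mono) auto
  moreover have "\<bar>2 * s - 1\<bar> \<le> 1" using s_ge s_less by simp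
  moreover have "0 \<le> (2 * s + 1) * (2 * s)" using s_ge by simp
  ultimately have "(2 * s + 1) * (2 * s) * \<bar>2 * s - 1\<bar> * \<bar>y\<bar> powr (2 * s - 2) \<le> 6 * 1 * 1"
    by (intro mult_mono) auto
  then show ?thesis
    using g3_eq_powr[OF assms] \<open>g3 y = g3 \<bar>y\<bar>\<close> s_ge by (simp add: abs_mult)
qed

lemma odd_bounded_third_deriv_g:
  obtains K where "odd_bounded_third_deriv g g1 g2 g3 K"
proof -
  have "continuous_on {-3..3} g3"
    unfolding g3_def
    by (intro continuous_at_imp_continuous_on ballI continuous_intros mu_derivs_isCont)
  then obtain B where B: "\<And>x. x \<in> {-3..3} \<Longrightarrow> norm (g3 x) \<le> B"
    using continuous_on_compact_bound[OF compact_Icc] by blast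
  have "\<bar>g3 x\<bar> \<le> max B 6" for x
  proof (cases "2 < \<bar>x\<bar>")
    case True
    then show ?thesis using abs_g3_le_six by fastforce
  next
    case False
    then have "x \<in> {-3..3}" by auto
    then show ?thesis using B by fastforce
  qed
  then show ?thesis
    using that[of "max B 6"] g_deriv g1_deriv g2_deriv g_odd
    unfolding odd_bounded_third_deriv_def g1_def by simp
qed

lemma symbol_estimates_g:
  assumes "odd_bounded_third_deriv g g1 g2 g3 K"
  shows "symbol_estimates g K 1"
proof -
  interpret odd_bounded_third_deriv g g1 g2 g3 K by (fact assms)
  show ?thesis
  proof unfold_locales
    show "\<bar>g t\<bar> \<le> \<bar>t\<bar> ^ 3" for t
    proof -
      have "(\<mu> t)\<^sup>2 \<le> 1" using mu_pos[of t] mu_le_one[of t] by (simp add: power_le_one)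
      then show ?thesis unfolding g_def using mult_right_mono[of "(\<mu> t)\<^sup>2" 1 "\<bar>t\<bar> ^ 3"]
        by (simp add: abs_mult power_abs)
    qed
    show "g t = t ^ 3" if "\<bar>t\<bar> \<le> 1" for t using mu_eq_one[OF that] unfolding g_def by simp
  qed (use K_nonneg g_odd abs_g_add_le abs_g_four_le in auto)
qed

lemma mult_symbol_eq: "0 < N \<Longrightarrow> (mult \<mu> N t)\<^sup>2 * t ^ 3 = N ^ 3 * g (t / N)"
  unfolding mult_def g_def by (simp add: power_divide)

lemma symbol_estimates_mult:
  obtains K where "\<And>N. 1 \<le> N \<Longrightarrow> symbol_estimates (\<lambda>t. (mult \<mu> N t)\<^sup>2 * t ^ 3) K N"
proof -
  obtain K where "odd_bounded_third_deriv g g1 g2 g3 K" by (rule odd_bounded_third_deriv_g)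
  then have est: "symbol_estimates g K 1" by (rule symbol_estimates_g)
  have "symbol_estimates (\<lambda>t. (mult \<mu> N t)\<^sup>2 * t ^ 3) K N" if "1 \<le> N" for N
    using symbol_estimates_rescale[OF est, of N] mult_symbol_eq[of N] that by simp
  then show ?thesis by (rule that)
qed

end

lemma sum_rearr_eq:
  fixes h :: "real \<Rightarrow> real"
  assumes \<sigma>: "sorting_perm n \<xi> \<sigma>" and n: "n \<le> 6" and h0: "h 0 = 0"
  shows "(\<Sum>i<n. h (\<xi> i)) = (\<Sum>j<6. h (rearr n \<xi> \<sigma> j))"
proof -
  have "(\<Sum>i<n. h (\<xi> i)) = (\<Sum>j<n. h (\<xi> (\<sigma> j)))"
    using \<sigma> sum.reindex_bij_betw[of \<sigma> "{..<n}" "{..<n}" "\<lambda>i. h (\<xi> i)"] unfolding sorting_perm_def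
    by simp
  also have "\<dots> = (\<Sum>j<n. h (rearr n \<xi> \<sigma> j))" by (rule sum.cong) (auto simp: rearr_def)
  also have "\<dots> = (\<Sum>j<6. h (rearr n \<xi> \<sigma> j))"
    using n by (intro sum.mono_neutral_left) (auto simp: rearr_def h0)
  finally show ?thesis .
qed

lemma rearr_abs_antimono:
  assumes "sorting_perm n \<xi> \<sigma>" and "i \<le> j"
  shows "\<bar>rearr n \<xi> \<sigma> j\<bar> \<le> \<bar>rearr n \<xi> \<sigma> i\<bar>"
  using assms unfolding sorting_perm_def rearr_def by (cases "j < n") auto

text \<open>For \<open>n = 5\<close> the rearranged tuple is padded with \<open>x 5 = 0\<close>, so the sum in \<open>Om2\<close> may be
  taken over \<open>{2..<6}\<close> in both cases.\<close>

lemma Omega_rearranged: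
  assumes \<xi>: "\<xi> \<in> Omega m A c0 N lam n" and n: "n \<in> {5, 6}"
  obtains x where "x 0 + x 1 + x 2 + x 3 + x 4 + x 5 = 0"
    and "\<bar>x 1\<bar> \<le> \<bar>x 0\<bar>" "\<bar>x 2\<bar> \<le> \<bar>x 1\<bar>" "\<bar>x 3\<bar> \<le> \<bar>x 2\<bar>" "\<bar>x 4\<bar> \<le> \<bar>x 3\<bar>" "\<bar>x 5\<bar> \<le> \<bar>x 4\<bar>"
    and "Om1 c0 x \<or> Om2 A c0 N 6 x \<or> Om3 c0 x \<or> Om4 m c0 x"
    and "\<And>h :: real \<Rightarrow> real. h 0 = 0 \<Longrightarrow>
      (\<Sum>i<n. h (\<xi> i)) = h (x 0) + h (x 1) + h (x 2) + h (x 3) + h (x 4) + h (x 5)"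
proof -
  from \<xi> obtain \<sigma> where \<Gamma>: "\<xi> \<in> Gamma lam n" and \<sigma>: "sorting_perm n \<xi> \<sigma>"
    and region: "let x = rearr n \<xi> \<sigma> in Om1 c0 x \<or> Om2 A c0 N n x \<or> Om3 c0 x \<or> Om4 m c0 x"
    unfolding Omega_def by blast
  define x where "x = rearr n \<xi> \<sigma>"
  have "n \<le> 6" using n by auto
  have sums: "(\<Sum>i<n. h (\<xi> i)) = h (x 0) + h (x 1) + h (x 2) + h (x 3) + h (x 4) + h (x 5)"
    if "h 0 = 0" for h :: "real \<Rightarrow> real"
    using sum_rearr_eq[OF \<sigma> \<open>n \<le> 6\<close>, of h] that unfolding x_def by (simp add: eval_nat_numeral)
  have "(\<Sum>j\<in>{2..<n}. x j ^ 3) = (\<Sum>j\<in>{2..<6}. x j ^ 3)"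
    using n by (auto simp: x_def rearr_def eval_nat_numeral)
  then have "Om2 A c0 N n x = Om2 A c0 N 6 x" unfolding Om2_def by simp
  then have "Om1 c0 x \<or> Om2 A c0 N 6 x \<or> Om3 c0 x \<or> Om4 m c0 x"
    using region unfolding x_def Let_def by simp
  moreover have "x 0 + x 1 + x 2 + x 3 + x 4 + x 5 = 0"
    using \<Gamma> sums[of "\<lambda>t. t"] unfolding Gamma_def by simp
  moreover have "\<bar>x 1\<bar> \<le> \<bar>x 0\<bar>" "\<bar>x 2\<bar> \<le> \<bar>x 1\<bar>" "\<bar>x 3\<bar> \<le> \<bar>x 2\<bar>" "\<bar>x 4\<bar> \<le> \<bar>x 3\<bar>" "\<bar>x 5\<bar> \<le> \<bar>x 4\<bar>"
    unfolding x_def by (rule rearr_abs_antimono[OF \<sigma>]; simp)+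
  ultimately show ?thesis using that sums by blast
qed

lemma Omega_bound:
  assumes est: "symbol_estimates (\<lambda>t. (m t)\<^sup>2 * t ^ 3) K N" and c0: "100 \<le> c0"
    and \<xi>: "\<xi> \<in> Omega m A c0 N lam n" and n: "n \<in> {5, 6}"
  shows "cmod (Mk m n \<xi>) \<le> 10 * (K + 1) * \<bar>alpha n \<xi>\<bar>"
proof -
  interpret symbol_estimates "\<lambda>t. (m t)\<^sup>2 * t ^ 3" K N by (fact est)
  obtain x where zero_sum: "x 0 + x 1 + x 2 + x 3 + x 4 + x 5 = 0"
    and sorted: "\<bar>x 1\<bar> \<le> \<bar>x 0\<bar>" "\<bar>x 2\<bar> \<le> \<bar>x 1\<bar>" "\<bar>x 3\<bar> \<le> \<bar>x 2\<bar>" "\<bar>x 4\<bar> \<le> \<bar>x 3\<bar>" "\<bar>x 5\<bar> \<le> \<bar>x 4\<bar>"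
    and region: "Om1 c0 x \<or> Om2 A c0 N 6 x \<or> Om3 c0 x \<or> Om4 m c0 x"
    and sums: "\<And>h :: real \<Rightarrow> real. h 0 = 0 \<Longrightarrow>
      (\<Sum>i<n. h (\<xi> i)) = h (x 0) + h (x 1) + h (x 2) + h (x 3) + h (x 4) + h (x 5)"
    using Omega_rearranged[OF \<xi> n] by blast
  have "\<bar>(m (x 0))\<^sup>2 * x 0 ^ 3 + (m (x 1))\<^sup>2 * x 1 ^ 3 + (m (x 2))\<^sup>2 * x 2 ^ 3
      + (m (x 3))\<^sup>2 * x 3 ^ 3 + (m (x 4))\<^sup>2 * x 4 ^ 3 + (m (x 5))\<^sup>2 * x 5 ^ 3\<bar>
    \<le> 10 * (K + 1) * \<bar>x 0 ^ 3 + x 1 ^ 3 + x 2 ^ 3 + x 3 ^ 3 + x 4 ^ 3 + x 5 ^ 3\<bar>"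
    using region
  proof (elim disjE)
    assume "Om1 c0 x"
    then show ?thesis unfolding Om1_def ll_def by (rule Omega1_bound[OF zero_sum sorted c0])
  next
    assume "Om2 A c0 N 6 x"
    moreover have "{2..<6::nat} = {2, 3, 4, 5}" by auto
    ultimately show ?thesis
      unfolding Om2_def ll_def
      by (intro Omega2_bound[OF zero_sum sorted c0]) (simp_all add: add.assoc)
  next
    assume "Om3 c0 x"
    then show ?thesis
      unfolding Om3_def ll_def by (intro Omega3_bound[OF zero_sum sorted c0]) simp_all
  next
    assume "Om4 m c0 x"
    moreover have "(\<Sum>j<4. (m (x j))\<^sup>2 * x j ^ 3)
        = (m (x 0))\<^sup>2 * x 0 ^ 3 + (m (x 1))\<^sup>2 * x 1 ^ 3 + (m (x 2))\<^sup>2 * x 2 ^ 3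
          + (m (x 3))\<^sup>2 * x 3 ^ 3"
      by (simp add: eval_nat_numeral)
    ultimately show ?thesis
      unfolding Om4_def ll_def by (intro Omega4_bound[OF zero_sum sorted c0]) simp_all
  qed
  then show ?thesis
    unfolding Mk_def alpha_def norm_mult norm_ii norm_of_real
      sums[of "\<lambda>t. (m t)\<^sup>2 * t ^ 3", simplified] sums[of "\<lambda>t. t ^ 3", simplified]
    by simp
qed

theorem mainTheorem2:
  fixes k :: nat and s :: real and \<mu> :: "real \<Rightarrow> real"
  assumes "k \<in> {3, 4}" and "1/2 \<le> s" and "s < 1" and "profile s \<mu>"
  shows "\<forall>A\<ge>1. \<exists>C0>0. \<forall>c0\<ge>C0. \<exists>C. \<forall>N lam \<xi>. N \<ge> 1 \<longrightarrow> lam \<ge> 1 \<longrightarrow>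
           \<xi> \<in> Omega (mult \<mu> N) A c0 N lam (k + 2) \<longrightarrow>
           cmod (Mk (mult \<mu> N) (k + 2) \<xi>) \<le> C * \<bar>alpha (k + 2) \<xi>\<bar>"
proof (intro allI impI)
  fix A :: real
  interpret admissible_profile s \<mu> by unfold_locales (use assms in auto)
  obtain K where est: "\<And>N. 1 \<le> N \<Longrightarrow> symbol_estimates (\<lambda>t. (mult \<mu> N t)\<^sup>2 * t ^ 3) K N"
    using symbol_estimates_mult by blast
  have n: "k + 2 \<in> {5, 6}" using assms(1) by auto
  show "\<exists>C0>0. \<forall>c0\<ge>C0. \<exists>C. \<forall>N lam \<xi>. N \<ge> 1 \<longrightarrow> lam \<ge> 1 \<longrightarrow>
           \<xi> \<in> Omega (mult \<mu> N) A c0 N lam (k + 2) \<longrightarrow>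
           cmod (Mk (mult \<mu> N) (k + 2) \<xi>) \<le> C * \<bar>alpha (k + 2) \<xi>\<bar>"
    using Omega_bound[OF est _ _ n]
    by (intro exI[of _ 100] conjI allI impI exI[of _ "10 * (K + 1)"]) auto
qed

end
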